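(* Let $d\ge1$ be an integer, $0<\lambda<1$, and define $v^*_0=1$ and $v^*_k=1-\sqrt[d]{1-\lambda v^*_{k-1}}$ for $k=1,2,\dots$. Then $v^*_k=\Theta((\lambda/d)^k)$ as $k\to\infty$, i.e. there exist constants $0<c\le C<\infty$ such that $c(\lambda/d)^k\le v^*_k\le C(\lambda/d)^k$ for all sufficiently large $k$. *)

theory Defs
  imports "HOL-Analysis.Analysis"
begin

fun vstar :: "nat \<Rightarrow> real \<Rightarrow> nat \<Rightarrow> real" where
  "vstar d lam 0 = 1"
| "vstar d lam (Suc k) = 1 - root d (1 - lam * vstar d lam k)"

end

theory Submission
  imports Defs
begin

text \<open>Write \<open>f y = 1 - root d (1 - y)\<close>, so that \<open>vstar (k + 1) = f (lam * vstar k)\<close>.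
  Bernoulli's inequality gives \<open>f y \<ge> y / d\<close>, which yields the lower bound \<open>(lam/d)^k\<close> directly.
  Conversely, factoring \<open>1 - a^d\<close> with \<open>a = root d (1 - y)\<close> gives \<open>f y \<le> y / (d (1 - y))\<close>;
  since \<open>vstar k \<le> lam^k\<close>, each step loses at most a factor \<open>1/(1 - lam^(k+1))\<close> against
  \<open>lam/d\<close>, and \<open>\<Prod>j\<ge>1. 1/(1 - lam^j) \<le> exp (lam / (1 - lam)\<^sup>2)\<close>.\<close>

lemma of_nat_mult_power_le_sum_power:
  fixes a :: "'a::linordered_semidom"
  assumes "0 \<le> a" "a \<le> 1"
  shows "of_nat n * a ^ n \<le> (\<Sum>i<n. a ^ i)"
  using sum_bounded_below[of "{..<n}" "a ^ n" "\<lambda>i. a ^ i"] power_decreasing[OF _ assms]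
  by simp

lemma one_minus_root_ge:
  assumes "d \<ge> 1" "0 \<le> y" "y \<le> 1"
  shows "y / real d \<le> 1 - root d (1 - y)"
proof -
  have y_div: "y / real d \<le> 1"
    using assms by (simp add: divide_le_eq)
  have "1 - y \<le> (1 - y / real d) ^ d"
    using Bernoulli_inequality[of "- (y / real d)" d] y_div assms by simp
  then have "root d (1 - y) \<le> root d ((1 - y / real d) ^ d)"
    using assms by simp
  also have "\<dots> = 1 - y / real d"
    using y_div assms by (intro real_root_power_cancel) auto
  finally show ?thesis by simp
qed

lemma one_minus_root_le:
  assumes "d \<ge> 1" "0 \<le> y" "y < 1"
  shows "1 - root d (1 - y) \<le> y / (real d * (1 - y))"
proof -
  define a where "a = root d (1 - y)"
  have a: "0 \<le> a" "a \<le> 1" "a ^ d = 1 - y"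
    using assms by (auto simp: a_def real_root_ge_zero)
  have "(1 - a) * (real d * (1 - y)) = (1 - a) * (real d * a ^ d)"
    using a by simp
  also have "\<dots> \<le> (1 - a) * (\<Sum>i<d. a ^ i)"
    using a by (intro mult_left_mono of_nat_mult_power_le_sum_power) auto
  also have "\<dots> = y"
    using a by (simp add: one_diff_power_eq[symmetric])
  finally show ?thesis
    using assms by (simp add: a_def pos_le_divide_eq)
qed

lemma one_minus_root_bounds:
  assumes "d \<ge> 1" "0 \<le> y" "y \<le> 1"
  shows "0 \<le> 1 - root d (1 - y)" "1 - root d (1 - y) \<le> y"
proof -
  have "1 - y \<le> root d (1 - y)"
    using assms real_root_pow_pos2[of d "1 - y"]
      power_decreasing[of 1 d "root d (1 - y)"] by (simp add: real_root_ge_zero)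
  then show "1 - root d (1 - y) \<le> y" by simp
  show "0 \<le> 1 - root d (1 - y)"
    using assms by simp
qed

lemma inverse_one_minus_le_exp:
  fixes t :: real
  assumes "0 \<le> t" "t \<le> s" "s < 1"
  shows "1 / (1 - t) \<le> exp (t / (1 - s))"
proof -
  have "1 / (1 - t) = 1 + t / (1 - t)"
    using assms by (simp add: field_simps)
  also have "\<dots> \<le> exp (t / (1 - t))"
    by (rule exp_ge_add_one_self)
  also have "\<dots> \<le> exp (t / (1 - s))"
    using assms by (simp add: frac_le)
  finally show ?thesis .
qed

context
  fixes d :: nat and lam :: real
  assumes d: "d \<ge> 1" and lam: "0 < lam" "lam < 1"
begin

lemma vstar_nonneg_le_power: "0 \<le> vstar d lam k \<and> vstar d lam k \<le> lam ^ k"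
proof (induction k)
  case (Suc k)
  let ?y = "lam * vstar d lam k"
  have "0 \<le> ?y" "?y \<le> lam ^ Suc k"
    using Suc lam by auto
  moreover have "lam ^ Suc k \<le> 1"
    using lam by (intro power_le_one) auto
  ultimately have "0 \<le> 1 - root d (1 - ?y)" "1 - root d (1 - ?y) \<le> lam ^ Suc k"
    using one_minus_root_bounds[OF d, of ?y] by auto
  then show ?case
    by simp
qed simp

lemma lam_mult_vstar_bounds:
  "0 \<le> lam * vstar d lam k" "lam * vstar d lam k \<le> lam ^ Suc k" "lam ^ Suc k \<le> lam"
proof -
  show "0 \<le> lam * vstar d lam k" "lam * vstar d lam k \<le> lam ^ Suc k"
    using vstar_nonneg_le_power[of k] lam by auto
  show "lam ^ Suc k \<le> lam"
    using lam by (simp add: mult_left_le_one_le power_le_one)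
qed

lemma vstar_lower: "(lam / real d) ^ k \<le> vstar d lam k"
proof (induction k)
  case (Suc k)
  have "(lam / real d) ^ Suc k \<le> lam * vstar d lam k / real d"
    using Suc lam by (simp add: divide_right_mono)
  also have "\<dots> \<le> vstar d lam (Suc k)"
    using one_minus_root_ge[OF d, of "lam * vstar d lam k"] lam_mult_vstar_bounds[of k] lam
    by simp
  finally show ?case .
qed simp

lemma vstar_Suc_le: "vstar d lam (Suc k) \<le> lam / real d * vstar d lam k * exp (lam ^ Suc k / (1 - lam))"
proof -
  let ?v = "vstar d lam k"
  note v = lam_mult_vstar_bounds[of k]
  have pow_lt: "lam ^ Suc k < 1"
    using v(3) lam by linarith
  have v_lt: "lam * ?v < 1"
    using v(2) pow_lt by linarith
  have "vstar d lam (Suc k) \<le> lam * ?v / (real d * (1 - lam * ?v))"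
    using one_minus_root_le[OF d v(1) v_lt] by simp
  also have "\<dots> = lam / real d * ?v * (1 / (1 - lam * ?v))"
    by simp
  also have "\<dots> \<le> lam / real d * ?v * exp (lam ^ Suc k / (1 - lam))"
  proof (intro mult_left_mono)
    have "1 / (1 - lam * ?v) \<le> 1 / (1 - lam ^ Suc k)"
      using v v_lt pow_lt by (intro frac_le) auto
    also have "\<dots> \<le> exp (lam ^ Suc k / (1 - lam))"
      using v lam by (intro inverse_one_minus_le_exp) auto
    finally show "1 / (1 - lam * ?v) \<le> exp (lam ^ Suc k / (1 - lam))" .
  qed (use v lam in auto)
  finally show ?thesis .
qed

lemma vstar_upper: "vstar d lam k \<le> (lam / real d) ^ k * exp (lam * (1 - lam ^ k) / (1 - lam)\<^sup>2)"
proof (induction k)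
  case (Suc k)
  have exponent: "lam * (1 - lam ^ k) / (1 - lam)\<^sup>2 + lam ^ Suc k / (1 - lam)
      = lam * (1 - lam ^ Suc k) / (1 - lam)\<^sup>2"
    using lam by (simp add: divide_simps) (simp add: algebra_simps power2_eq_square)
  have "vstar d lam (Suc k) \<le> lam / real d * vstar d lam k * exp (lam ^ Suc k / (1 - lam))"
    by (rule vstar_Suc_le)
  also have "\<dots> \<le> lam / real d * ((lam / real d) ^ k * exp (lam * (1 - lam ^ k) / (1 - lam)\<^sup>2))
      * exp (lam ^ Suc k / (1 - lam))"
    using Suc lam by (intro mult_right_mono mult_left_mono) auto
  also have "\<dots> = (lam / real d) ^ Suc k * exp (lam * (1 - lam ^ Suc k) / (1 - lam)\<^sup>2)"
    unfolding exponent[symmetric] exp_add by (simp add: ac_simps)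
  finally show ?case .
qed simp

lemma vstar_le_const_mult: "vstar d lam k \<le> exp (lam / (1 - lam)\<^sup>2) * (lam / real d) ^ k"
proof -
  have "lam * (1 - lam ^ k) / (1 - lam)\<^sup>2 \<le> lam / (1 - lam)\<^sup>2"
    using lam by (intro divide_right_mono) (auto simp: mult_le_cancel_left1)
  then have "(lam / real d) ^ k * exp (lam * (1 - lam ^ k) / (1 - lam)\<^sup>2)
      \<le> (lam / real d) ^ k * exp (lam / (1 - lam)\<^sup>2)"
    using lam by (intro mult_left_mono) auto
  then show ?thesis
    using vstar_upper[of k] by (simp add: mult.commute)
qed

end

theorem theorem3p3:
  fixes d :: nat and lam :: real
  assumes "d \<ge> 1" and "0 < lam" and "lam < 1"
  shows "\<exists>c C. 0 < c \<and> c \<le> C \<and>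
           (\<forall>\<^sub>F k in sequentially.
              c * (lam / real d) ^ k \<le> vstar d lam k \<and>
              vstar d lam k \<le> C * (lam / real d) ^ k)"
proof (intro exI conjI always_eventually allI)
  show "(0::real) < 1" "1 \<le> exp (lam / (1 - lam)\<^sup>2)"
    using assms by auto
  fix k
  show "1 * (lam / real d) ^ k \<le> vstar d lam k"
    using vstar_lower[OF assms] by simp
  show "vstar d lam k \<le> exp (lam / (1 - lam)\<^sup>2) * (lam / real d) ^ k"
    by (rule vstar_le_const_mult[OF assms])
qed

end
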